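(* Let $X$ be a reflexive real Banach space. Then for every nonempty closed convex subset $V$ of $X$, the triplet $(X,V,\mathcal{CB}(X))$ has weak-$\mathscr{F}_{cmc}$-SACP, where $\mathcal{CB}(X)$ is the family of all nonempty closed bounded subsets of $X$ and $\mathscr{F}_{cmc}$ is the class of all convex, monotone, coercive functions $f:\ell_\infty^+(F)\to[0,\infty)$, $F\in\mathcal{CB}(X)$.
   Context: For a nonempty closed bounded set $F\subseteq X$, $\ell_\infty^+(F)$ is the set of bounded functions $\varphi:F\to[0,\infty)$ with the coordinatewise order and sup norm $\|\varphi\|_\infty$. $f:\ell_\infty^+(F)\to[0,\infty)$ is monotone if $\varphi_1\le\varphi_2$ implies $f(\varphi_1)\le f(\varphi_2)$, and coercive if $f(\varphi)\to\infty$ as $\|\varphi\|_\infty\to\infty$. For $x\in X$, $r_f(x,F)=f((\|x-a\|)_{a\in F})$ and $\mathrm{rad}_V^f(F)=\inf_{v\in V}r_f(v,F)$. The triplet $(X,V,\mathfrak{F})$ has weak-$\mathscr{F}$-SACP if for every $F\in\mathfrak{F}$, every $f\in\mathscr{F}$ defined on $\ell_\infty^+(F)$ and every sequence $(v_n)\subseteq V$ with $r_f(v_n,F)\to\mathrm{rad}_V^f(F)$, $(v_n)$ has a weakly convergent subsequence. *)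

theory Defs
  imports "HOL-Analysis.Analysis"
begin

(* Reflexivity: the canonical embedding of X into its bidual is surjective,
i.e. every continuous linear functional on the dual X* = ('a L real) is evaluation at some x. *)
definition reflexive_space :: "'a::real_normed_vector itself \<Rightarrow> bool" where
  "reflexive_space _ \<longleftrightarrow>
     (\<forall>\<Phi> :: ('a \<Rightarrow>\<^sub>L real) \<Rightarrow>\<^sub>L real. \<exists>x::'a. \<forall>\<phi>. blinfun_apply \<Phi> \<phi> = blinfun_apply \<phi> x)"

definition weakly_converges_to :: "(nat \<Rightarrow> 'a::real_normed_vector) \<Rightarrow> 'a \<Rightarrow> bool" where
  "weakly_converges_to v x \<longleftrightarrow>
     (\<forall>\<phi> :: 'a \<Rightarrow>\<^sub>L real. (\<lambda>n. blinfun_apply \<phi> (v n)) \<longlonglongrightarrow> blinfun_apply \<phi> x)"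

(* l_inf^+(F): bounded nonnegative functions on F, represented extensionally
(value 0 outside F). *)
definition linf_pos :: "'a set \<Rightarrow> ('a \<Rightarrow> real) set" where
  "linf_pos F = {\<phi>. (\<forall>a\<in>F. 0 \<le> \<phi> a) \<and> bounded (\<phi> ` F) \<and> (\<forall>a. a \<notin> F \<longrightarrow> \<phi> a = 0)}"

definition sup_norm :: "'a set \<Rightarrow> ('a \<Rightarrow> real) \<Rightarrow> real" where
  "sup_norm F \<phi> = (SUP a\<in>F. \<bar>\<phi> a\<bar>)"

definition Fcmc :: "'a set \<Rightarrow> (('a \<Rightarrow> real) \<Rightarrow> real) set" where
  "Fcmc F = {f.
     (\<forall>\<phi>\<in>linf_pos F. 0 \<le> f \<phi>) \<and>
     (\<forall>\<phi>1\<in>linf_pos F. \<forall>\<phi>2\<in>linf_pos F. \<forall>t::real. 0 \<le> t \<and> t \<le> 1 \<longrightarrow>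
         f (\<lambda>a. (1 - t) * \<phi>1 a + t * \<phi>2 a) \<le> (1 - t) * f \<phi>1 + t * f \<phi>2) \<and>
     (\<forall>\<phi>1\<in>linf_pos F. \<forall>\<phi>2\<in>linf_pos F. (\<forall>a\<in>F. \<phi>1 a \<le> \<phi>2 a) \<longrightarrow> f \<phi>1 \<le> f \<phi>2) \<and>
     (\<forall>M::real. \<exists>R::real. \<forall>\<phi>\<in>linf_pos F. R \<le> sup_norm F \<phi> \<longrightarrow> M \<le> f \<phi>)}"

definition r_f :: "(('a \<Rightarrow> real) \<Rightarrow> real) \<Rightarrow> 'a::real_normed_vector \<Rightarrow> 'a set \<Rightarrow> real" where
  "r_f f x F = f (\<lambda>a. if a \<in> F then norm (x - a) else 0)"

definition rad_f :: "(('a \<Rightarrow> real) \<Rightarrow> real) \<Rightarrow> 'a::real_normed_vector set \<Rightarrow> 'a set \<Rightarrow> real" where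
  "rad_f f V F = (INF v\<in>V. r_f f v F)"

definition weak_SACP :: "'a::real_normed_vector set \<Rightarrow> 'a set set \<Rightarrow> ('a set \<Rightarrow> (('a \<Rightarrow> real) \<Rightarrow> real) set) \<Rightarrow> bool" where
  "weak_SACP V FF FC \<longleftrightarrow>
     (\<forall>F\<in>FF. \<forall>f\<in>FC F. \<forall>v::nat \<Rightarrow> 'a. (\<forall>n. v n \<in> V) \<and> (\<lambda>n. r_f f (v n) F) \<longlonglongrightarrow> rad_f f V F \<longrightarrow>
        (\<exists>s x. strict_mono s \<and> weakly_converges_to (v \<circ> s) x))"

definition CB :: "'a::real_normed_vector set set" where
  "CB = {F. F \<noteq> {} \<and> closed F \<and> bounded F}"

end

(*
  Coercivity of f bounds every sequence along which r_f f (v n) F stays bounded, in particular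
  every minimizing sequence; so the statement reduces to the weak sequential compactness of
  bounded sets in a reflexive space.

  For a bounded sequence (x_n), take norming functionals of a countable dense subset of the
  closed span Y of the sequence and pass, by a diagonal argument, to a subsequence along which
  all of them converge. With p(psi) = sup_n |psi(x_n)|, the span of these functionals is
  p-dense in the dual: otherwise Hahn-Banach gives a nonzero functional on the dual dominated
  by p and vanishing on the span, which by reflexivity is evaluation at a point of Y killed by
  all norming functionals, hence at 0. So psi(x_n) converges for every psi, and reflexivity
  turns the limit functional into a weak limit.
*)

theory Submission
  imports Defs "HOL-Library.Diagonal_Subsequence"
begin

section \<open>Hahn--Banach extension\<close>

text \<open>Partial linear functionals are handled through their graphs, so that Zorn's lemma
  applies to set inclusion.\<close>

definition linear_graph :: "('b::real_vector \<times> real) set \<Rightarrow> bool" where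
  "linear_graph G \<longleftrightarrow> (0, 0) \<in> G \<and>
     (\<forall>x a y b. (x, a) \<in> G \<longrightarrow> (y, b) \<in> G \<longrightarrow> (x + y, a + b) \<in> G) \<and>
     (\<forall>x a c. (x, a) \<in> G \<longrightarrow> (c *\<^sub>R x, c * a) \<in> G) \<and>
     (\<forall>x a b. (x, a) \<in> G \<longrightarrow> (x, b) \<in> G \<longrightarrow> a = b)"

lemma linear_graphD:
  assumes "linear_graph G"
  shows "(0, 0) \<in> G"
    and "(x, a) \<in> G \<Longrightarrow> (y, b) \<in> G \<Longrightarrow> (x + y, a + b) \<in> G"
    and "(x, a) \<in> G \<Longrightarrow> (c *\<^sub>R x, c * a) \<in> G"
    and "(x, a) \<in> G \<Longrightarrow> (x, b) \<in> G \<Longrightarrow> a = b"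
  using assms unfolding linear_graph_def by blast+

lemma linear_graph_subspace_times_zero:
  assumes "subspace M"
  shows "linear_graph (M \<times> {0})"
  using assms unfolding linear_graph_def by (simp add: subspace_0 subspace_add subspace_scale)

lemma linear_graph_Union_chain:
  assumes "C \<noteq> {}" and "\<And>G. G \<in> C \<Longrightarrow> linear_graph G"
    and chain: "\<And>G H. G \<in> C \<Longrightarrow> H \<in> C \<Longrightarrow> G \<subseteq> H \<or> H \<subseteq> G"
  shows "linear_graph (\<Union>C)"
proof -
  have common: "\<exists>G\<in>C. p \<in> G \<and> p' \<in> G" if pp': "p \<in> \<Union>C" "p' \<in> \<Union>C" for p p'
  proof -
    obtain G H where "G \<in> C" "p \<in> G" "H \<in> C" "p' \<in> H"
      using pp' by blast
    then show ?thesis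
      using chain[of G H] by blast
  qed
  show ?thesis
    unfolding linear_graph_def
  proof (intro conjI allI impI)
    show "(0, 0) \<in> \<Union>C"
      using assms(1,2) linear_graphD(1) by blast
    show "(x + y, a + b) \<in> \<Union>C" if "(x, a) \<in> \<Union>C" "(y, b) \<in> \<Union>C" for x a y b
      using common[OF that] assms(2) linear_graphD(2) by blast
    show "(c *\<^sub>R x, c * a) \<in> \<Union>C" if "(x, a) \<in> \<Union>C" for x a c
      using that assms(2) linear_graphD(3) by blast
    show "a = b" if "(x, a) \<in> \<Union>C" "(x, b) \<in> \<Union>C" for x a b
      using common[OF that] assms(2) linear_graphD(4) by blast
  qed
qed

definition extend_graph :: "('b::real_vector \<times> real) set \<Rightarrow> 'b \<Rightarrow> real \<Rightarrow> ('b \<times> real) set" where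
  "extend_graph G z c = {(x + t *\<^sub>R z, a + t * c) | x a t. (x, a) \<in> G}"

lemma linear_graph_extend_graph:
  assumes G: "linear_graph G" and z: "z \<notin> Domain G"
  shows "linear_graph (extend_graph G z c)"
proof -
  note GD = linear_graphD[OF G]
  have unique: "t = t' \<and> a = a'"
    if "(x, a) \<in> G" "(x', a') \<in> G" "x + t *\<^sub>R z = x' + t' *\<^sub>R z" for x a x' a' t t'
  proof -
    have "t = t'"
    proof (rule ccontr)
      assume "t \<noteq> t'"
      have "(x + (-1) *\<^sub>R x', a + (-1) * a') \<in> G"
        using GD(2)[OF that(1) GD(3)[OF that(2)]] .
      moreover have "x + (-1) *\<^sub>R x' = (t' - t) *\<^sub>R z"
        using that(3) by (simp add: algebra_simps)
      ultimately have "(z, (a - a') / (t' - t)) \<in> G"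
        using GD(3)[of _ _ "1 / (t' - t)"] \<open>t \<noteq> t'\<close> by fastforce
      then show False
        using z by blast
    qed
    then show ?thesis
      using that GD(4) by auto
  qed
  show ?thesis
    unfolding linear_graph_def
  proof (intro conjI allI impI)
    show "(0, 0) \<in> extend_graph G z c"
      unfolding extend_graph_def using GD(1) by force
  next
    fix x a y b
    assume "(x, a) \<in> extend_graph G z c" and "(y, b) \<in> extend_graph G z c"
    then obtain x1 a1 t1 x2 a2 t2 where "(x1, a1) \<in> G" "(x2, a2) \<in> G"
      "x = x1 + t1 *\<^sub>R z" "a = a1 + t1 * c" "y = x2 + t2 *\<^sub>R z" "b = a2 + t2 * c"
      unfolding extend_graph_def by blast
    then show "(x + y, a + b) \<in> extend_graph G z c"
      unfolding extend_graph_def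
      by (intro CollectI exI[of _ "x1 + x2"] exI[of _ "a1 + a2"] exI[of _ "t1 + t2"])
        (auto simp: GD(2) algebra_simps)
  next
    fix x a r
    assume "(x, a) \<in> extend_graph G z c"
    then obtain x1 a1 t1 where "(x1, a1) \<in> G" "x = x1 + t1 *\<^sub>R z" "a = a1 + t1 * c"
      unfolding extend_graph_def by blast
    moreover from this have "(r *\<^sub>R x1, r * a1) \<in> G"
      using GD(3) by blast
    ultimately show "(r *\<^sub>R x, r * a) \<in> extend_graph G z c"
      unfolding extend_graph_def
      by (intro CollectI exI[of _ "r *\<^sub>R x1"] exI[of _ "r * a1"] exI[of _ "r * t1"])
        (simp add: algebra_simps)
  next
    fix x a b
    assume "(x, a) \<in> extend_graph G z c" and "(x, b) \<in> extend_graph G z c"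
    then show "a = b"
      unfolding extend_graph_def using unique by blast
  qed
qed

lemma dominated_extend_graph_exists:
  fixes q :: "'b::real_vector \<Rightarrow> real"
  assumes G: "linear_graph G" and dom: "\<And>x a. (x, a) \<in> G \<Longrightarrow> a \<le> q x"
    and q_add: "\<And>x y. q (x + y) \<le> q x + q y"
    and q_hom: "\<And>c x. 0 \<le> c \<Longrightarrow> q (c *\<^sub>R x) = c * q x"
  shows "\<exists>c. \<forall>(x, a) \<in> extend_graph G z c. a \<le> q x"
proof -
  note GD = linear_graphD[OF G]
  have gap: "a - q (x - z) \<le> q (y + z) - b" if "(x, a) \<in> G" "(y, b) \<in> G" for x a y b
  proof -
    have "a + b \<le> q ((x - z) + (y + z))"
      using dom[OF GD(2)[OF that]] by simp
    also have "\<dots> \<le> q (x - z) + q (y + z)"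
      by (rule q_add)
    finally show ?thesis
      by simp
  qed
  \<comment> \<open>By \<open>gap\<close>, any \<open>c\<close> between the supremum of the left-hand sides and the infimum
    of the right-hand sides is admissible.\<close>
  define c where "c = (SUP (x, a)\<in>G. a - q (x - z))"
  have bdd: "bdd_above ((\<lambda>(x, a). a - q (x - z)) ` G)"
    using gap[OF _ GD(1)] by (auto intro!: bdd_aboveI)
  have c_lower: "a - q (x - z) \<le> c" if "(x, a) \<in> G" for x a
    unfolding c_def using cSUP_upper[OF that bdd] by simp
  have c_upper: "c \<le> q (y + z) - b" if "(y, b) \<in> G" for y b
    unfolding c_def using gap[OF _ that] GD(1) by (intro cSUP_least) auto
  have "a + t * c \<le> q (x + t *\<^sub>R z)" if xa: "(x, a) \<in> G" for x a t
  proof (cases t "0 :: real" rule: linorder_cases)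
    case less
    have "(- t) * (a / (- t) - q ((1 / (- t)) *\<^sub>R x - z)) \<le> (- t) * c"
      using c_lower[OF GD(3)[OF xa, of "1 / (- t)"]] less by (intro mult_left_mono) auto
    moreover have "(- t) *\<^sub>R ((1 / (- t)) *\<^sub>R x - z) = x + t *\<^sub>R z"
      using less by (simp add: algebra_simps)
    ultimately show ?thesis
      using less q_hom[of "- t" "(1 / (- t)) *\<^sub>R x - z"] by (simp add: algebra_simps)
  next
    case equal
    then show ?thesis
      using dom[OF xa] by simp
  next
    case greater
    have "t * c \<le> t * (q ((1 / t) *\<^sub>R x + z) - a / t)"
      using c_upper[OF GD(3)[OF xa, of "1 / t"]] greater by (intro mult_left_mono) auto
    moreover have "t *\<^sub>R ((1 / t) *\<^sub>R x + z) = x + t *\<^sub>R z"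
      using greater by (simp add: algebra_simps)
    ultimately show ?thesis
      using greater q_hom[of t "(1 / t) *\<^sub>R x + z"] by (simp add: algebra_simps)
  qed
  then show ?thesis
    unfolding extend_graph_def by blast
qed

theorem hahn_banach_linear_graph:
  fixes q :: "'b::real_vector \<Rightarrow> real"
  assumes G0: "linear_graph G0" and dom: "\<And>x a. (x, a) \<in> G0 \<Longrightarrow> a \<le> q x"
    and q_add: "\<And>x y. q (x + y) \<le> q x + q y"
    and q_hom: "\<And>c x. 0 \<le> c \<Longrightarrow> q (c *\<^sub>R x) = c * q x"
  shows "\<exists>F. linear F \<and> (\<forall>(x, a) \<in> G0. F x = a) \<and> (\<forall>x. F x \<le> q x)"
proof -
  define A where "A = {G. G0 \<subseteq> G \<and> linear_graph G \<and> (\<forall>(x, a) \<in> G. a \<le> q x)}"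
  have "\<exists>M\<in>A. \<forall>G\<in>A. M \<subseteq> G \<longrightarrow> G = M"
  proof (rule subset_Zorn_nonempty)
    show "A \<noteq> {}"
      using assms unfolding A_def by blast
    fix C
    assume C: "C \<noteq> {}" "subset.chain A C"
    then have "linear_graph (\<Union>C)"
      by (intro linear_graph_Union_chain) (auto simp: A_def subset_chain_def)
    then show "\<Union>C \<in> A"
      using C unfolding A_def subset_chain_def by blast
  qed
  then obtain M where "M \<in> A" and maximal: "\<And>G. G \<in> A \<Longrightarrow> M \<subseteq> G \<Longrightarrow> G = M"
    by blast
  then have M: "G0 \<subseteq> M" "linear_graph M" "\<And>x a. (x, a) \<in> M \<Longrightarrow> a \<le> q x"
    unfolding A_def by auto
  have total: "z \<in> Domain M" for z
  proof (rule ccontr)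
    assume z: "z \<notin> Domain M"
    obtain c where c: "\<forall>(x, a) \<in> extend_graph M z c. a \<le> q x"
      using dominated_extend_graph_exists[OF M(2,3) q_add q_hom] by blast
    have "M \<subseteq> extend_graph M z c"
      unfolding extend_graph_def by force
    moreover have "(z, c) \<in> extend_graph M z c"
      unfolding extend_graph_def using linear_graphD(1)[OF M(2)] by force
    ultimately have "extend_graph M z c \<in> A" "extend_graph M z c \<noteq> M"
      using M(1) linear_graph_extend_graph[OF M(2) z] c z unfolding A_def by auto
    then show False
      using maximal \<open>M \<subseteq> extend_graph M z c\<close> by blast
  qed
  define F where "F x = (THE a. (x, a) \<in> M)" for x
  have F: "(x, a) \<in> M \<longleftrightarrow> F x = a" for x a
    using total[of x] linear_graphD(4)[OF M(2)] unfolding F_def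
    by (auto intro: the_equality[symmetric] theI2)
  have "linear F"
  proof (rule linearI)
    show "F (x + y) = F x + F y" for x y
      using F linear_graphD(2)[OF M(2)] by blast
    show "F (c *\<^sub>R x) = c *\<^sub>R F x" for c x
      using F linear_graphD(3)[OF M(2)] by simp
  qed
  then show ?thesis
    using F M(1,3) by blast
qed

lemma hahn_banach_seminorm_subspace:
  fixes q :: "'b::real_vector \<Rightarrow> real"
  assumes q_add: "\<And>x y. q (x + y) \<le> q x + q y"
    and q_scale: "\<And>c x. q (c *\<^sub>R x) = \<bar>c\<bar> * q x"
    and M: "subspace M" and "0 < d" and far: "\<And>m. m \<in> M \<Longrightarrow> d \<le> q (z - m)"
  shows "\<exists>F. linear F \<and> (\<forall>m\<in>M. F m = 0) \<and> F z = d \<and> (\<forall>x. \<bar>F x\<bar> \<le> q x)"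
proof -
  have q_hom: "q (c *\<^sub>R x) = c * q x" if "0 \<le> c" for c x
    using q_scale[of c x] that by simp
  have q_minus: "q (- x) = q x" for x
    using q_scale[of "-1" x] by simp
  have q_nonneg: "0 \<le> q x" for x
    using q_add[of x "- x"] q_minus[of x] q_hom[of 0 0] by simp
  have "z \<notin> M"
    using far[of z] \<open>0 < d\<close> q_hom[of 0 0] by auto
  then have "z \<notin> Domain (M \<times> {0})"
    by blast
  define G0 where "G0 = extend_graph (M \<times> {0}) z d"
  have G0: "linear_graph G0"
    unfolding G0_def
    by (rule linear_graph_extend_graph[OF linear_graph_subspace_times_zero[OF M]]) fact
  have G0_iff: "(x, a) \<in> G0 \<longleftrightarrow> (\<exists>m t. m \<in> M \<and> x = m + t *\<^sub>R z \<and> a = t * d)" for x a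
    unfolding G0_def extend_graph_def by auto
  have "a \<le> q x" if xa: "(x, a) \<in> G0" for x a
  proof -
    obtain m t where m: "m \<in> M" and x: "x = m + t *\<^sub>R z" and a: "a = t * d"
      using xa G0_iff by blast
    show ?thesis
    proof (cases "0 < t")
      case True
      define m' where "m' = - ((1 / t) *\<^sub>R m)"
      have "m' \<in> M"
        using M m unfolding m'_def by (simp add: subspace_neg subspace_scale)
      then have "t * d \<le> t * q (z - m')"
        using far True by (intro mult_left_mono) auto
      also have "\<dots> = q (t *\<^sub>R (z - m'))"
        using True q_hom[of t] by simp
      also have "t *\<^sub>R (z - m') = x"
        using True x unfolding m'_def by (simp add: algebra_simps)
      finally show ?thesis
        using a by simp
    next
      case False
      then have "t * d \<le> 0"
        using \<open>0 < d\<close> by (simp add: mult_nonpos_nonneg)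
      then show ?thesis
        using a q_nonneg[of x] by linarith
    qed
  qed
  then obtain F where F: "linear F" "\<forall>(x, a) \<in> G0. F x = a" "\<And>x. F x \<le> q x"
    using hahn_banach_linear_graph[OF G0 _ q_add q_hom] by blast
  have "F m = 0" if "m \<in> M" for m
    using F(2) G0_iff[of m 0] that by force
  moreover have "F z = d"
    using F(2) G0_iff[of z d] subspace_0[OF M] by force
  moreover have "\<bar>F x\<bar> \<le> q x" for x
    using F(3)[of x] F(3)[of "- x"] linear_neg[OF F(1)] q_minus[of x] by simp
  ultimately show ?thesis
    using F(1) by blast
qed

lemma blinfun_vanishing_on_subspace_exists:
  fixes z :: "'a::real_normed_vector"
  assumes "subspace M" and "0 < d" and "\<And>m. m \<in> M \<Longrightarrow> d \<le> norm (z - m)"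
  shows "\<exists>g::'a \<Rightarrow>\<^sub>L real. (\<forall>m\<in>M. g m = 0) \<and> g z = d \<and> (\<forall>x. \<bar>g x\<bar> \<le> norm x)"
proof -
  obtain F where F: "linear F" "\<forall>m\<in>M. F m = 0" "F z = d" "\<forall>x. \<bar>F x\<bar> \<le> norm x"
    using hahn_banach_seminorm_subspace[of norm, OF norm_triangle_ineq norm_scaleR assms] by blast
  have "bounded_linear F"
    using F(1,4) by (intro bounded_linear_intro[where K = 1]) (auto simp: linear_add linear_scale)
  then show ?thesis
    using F by (intro exI[of _ "Blinfun F"]) (simp add: bounded_linear_Blinfun_apply)
qed

lemma norming_blinfun_exists:
  fixes y :: "'a::real_normed_vector"
  shows "\<exists>g::'a \<Rightarrow>\<^sub>L real. g y = norm y \<and> (\<forall>x. \<bar>g x\<bar> \<le> norm x)"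
proof (cases "y = 0")
  case True
  then show ?thesis
    by (intro exI[of _ 0]) simp
next
  case False
  have "subspace {0 :: 'a}"
    by (simp add: subspace_def)
  then show ?thesis
    using blinfun_vanishing_on_subspace_exists[of "{0}" "norm y" y] False by auto
qed

lemma mem_closed_subspace_if_annihilators_vanish:
  fixes x :: "'a::real_normed_vector"
  assumes "subspace Y" and "closed Y"
    and vanish: "\<And>g::'a \<Rightarrow>\<^sub>L real. (\<forall>y\<in>Y. g y = 0) \<Longrightarrow> g x = 0"
  shows "x \<in> Y"
proof (rule ccontr)
  assume "x \<notin> Y"
  moreover have "Y \<noteq> {}"
    using subspace_0[OF \<open>subspace Y\<close>] by blast
  ultimately have "0 < infdist x Y"
    using \<open>closed Y\<close> infdist_pos_not_in_closed by blast
  moreover have "infdist x Y \<le> norm (x - y)" if "y \<in> Y" for y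
    using infdist_le[OF that, of x] by (simp add: dist_norm)
  ultimately obtain g :: "'a \<Rightarrow>\<^sub>L real" where "\<forall>y\<in>Y. g y = 0" "g x = infdist x Y"
    using blinfun_vanishing_on_subspace_exists[OF \<open>subspace Y\<close>] by blast
  then show False
    using vanish \<open>0 < infdist x Y\<close> by simp
qed

section \<open>Bounded sequences in reflexive spaces\<close>

lemma convergent_if_uniformly_approximable:
  fixes f :: "nat \<Rightarrow> 'a::complete_space"
  assumes approx: "\<And>e. 0 < e \<Longrightarrow> \<exists>g. convergent g \<and> (\<forall>n. dist (f n) (g n) \<le> e)"
  shows "convergent f"
proof -
  have "Cauchy f"
  proof (rule metric_CauchyI)
    fix e :: real
    assume "0 < e"
    then obtain g where g: "convergent g" "\<And>n. dist (f n) (g n) \<le> e / 3"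
      using approx[of "e / 3"] by auto
    obtain M where M: "\<And>m n. M \<le> m \<Longrightarrow> M \<le> n \<Longrightarrow> dist (g m) (g n) < e / 3"
      using metric_CauchyD[OF convergent_Cauchy[OF g(1)], of "e / 3"] \<open>0 < e\<close> by auto
    have "dist (f m) (f n) < e" if "M \<le> m" "M \<le> n" for m n
      using dist_triangle[of "f m" "f n" "g m"] dist_triangle[of "g m" "f n" "g n"]
        g(2)[of m] g(2)[of n] M[OF that] by (simp add: dist_commute)
    then show "\<exists>M. \<forall>m\<ge>M. \<forall>n\<ge>M. dist (f m) (f n) < e"
      by blast
  qed
  then show ?thesis
    by (rule Cauchy_convergent)
qed

lemma diagonal_convergent_subseq:
  fixes h :: "'i::countable \<Rightarrow> nat \<Rightarrow> 'a::heine_borel"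
  assumes bounded: "\<And>i. bounded (range (h i))"
  shows "\<exists>s. strict_mono s \<and> (\<forall>i. convergent (\<lambda>n. h i (s n)))"
proof -
  interpret subseqs "\<lambda>k s. convergent (\<lambda>n. h (from_nat k) (s n))"
  proof unfold_locales
    fix k and s :: "nat \<Rightarrow> nat"
    have "bounded (range (h (from_nat k) \<circ> s))"
      using bounded by (rule bounded_subset) auto
    then show "\<exists>r. strict_mono r \<and> convergent (\<lambda>n. h (from_nat k) ((s \<circ> r) n))"
      unfolding convergent_def using bounded_imp_convergent_subsequence by (fastforce simp: o_def)
  qed
  have "convergent (\<lambda>n. h i (diagseq n))" for i
  proof -
    have "convergent (\<lambda>n. h (from_nat (to_nat i)) ((diagseq \<circ> (+) (Suc (to_nat i))) n))"
      by (rule diagseq_holds) (auto dest: convergent_subseq_convergent simp: o_def)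
    then have "convergent (\<lambda>n. h i (diagseq (n + Suc (to_nat i))))"
      by (simp only: o_def from_nat_to_nat add.commute[of "Suc (to_nat i)"])
    then show ?thesis
      by (rule convergent_ignore_initial_segment[THEN iffD1])
  qed
  then show ?thesis
    using subseq_diagseq by blast
qed

definition seq_seminorm :: "(nat \<Rightarrow> 'a::real_normed_vector) \<Rightarrow> ('a \<Rightarrow>\<^sub>L real) \<Rightarrow> real" where
  "seq_seminorm xs \<psi> = (SUP n. \<bar>\<psi> (xs n)\<bar>)"

lemma seq_seminorm_least:
  fixes \<psi> :: "'a::real_normed_vector \<Rightarrow>\<^sub>L real"
  shows "(\<And>n. \<bar>\<psi> (xs n)\<bar> \<le> K) \<Longrightarrow> seq_seminorm xs \<psi> \<le> K"
  unfolding seq_seminorm_def by (rule cSUP_least) auto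

context
  fixes xs :: "nat \<Rightarrow> 'a::real_normed_vector" and B :: real
  assumes norm_le: "\<And>n. norm (xs n) \<le> B"
begin

lemma blinfun_seq_abs_le:
  fixes \<psi> :: "'a \<Rightarrow>\<^sub>L real"
  shows "\<bar>\<psi> (xs n)\<bar> \<le> norm \<psi> * B"
proof -
  have "norm \<psi> * norm (xs n) \<le> norm \<psi> * B"
    using norm_le[of n] by (simp add: mult_left_mono)
  then show ?thesis
    using norm_blinfun[of \<psi> "xs n"] by (metis order_trans real_norm_def)
qed

lemma seq_seminorm_upper:
  fixes \<psi> :: "'a \<Rightarrow>\<^sub>L real"
  shows "\<bar>\<psi> (xs n)\<bar> \<le> seq_seminorm xs \<psi>"
  unfolding seq_seminorm_def
  by (rule cSUP_upper) (auto intro: bdd_aboveI2 blinfun_seq_abs_le)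

lemma seq_seminorm_le_norm:
  fixes \<psi> :: "'a \<Rightarrow>\<^sub>L real"
  shows "seq_seminorm xs \<psi> \<le> norm \<psi> * B"
  by (rule seq_seminorm_least) (rule blinfun_seq_abs_le)

lemma seq_seminorm_triangle:
  fixes \<phi> \<psi> :: "'a \<Rightarrow>\<^sub>L real"
  shows "seq_seminorm xs (\<phi> + \<psi>) \<le> seq_seminorm xs \<phi> + seq_seminorm xs \<psi>"
proof (rule seq_seminorm_least)
  fix n
  have "\<bar>(\<phi> + \<psi>) (xs n)\<bar> \<le> \<bar>\<phi> (xs n)\<bar> + \<bar>\<psi> (xs n)\<bar>"
    by (simp add: blinfun.add_left abs_triangle_ineq)
  then show "\<bar>(\<phi> + \<psi>) (xs n)\<bar> \<le> seq_seminorm xs \<phi> + seq_seminorm xs \<psi>"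
    using seq_seminorm_upper[of \<phi> n] seq_seminorm_upper[of \<psi> n] by linarith
qed

lemma seq_seminorm_scaleR_le:
  fixes \<psi> :: "'a \<Rightarrow>\<^sub>L real"
  shows "seq_seminorm xs (c *\<^sub>R \<psi>) \<le> \<bar>c\<bar> * seq_seminorm xs \<psi>"
  using seq_seminorm_upper[of \<psi>]
  by (intro seq_seminorm_least) (simp add: blinfun.scaleR_left abs_mult mult_left_mono)

lemma seq_seminorm_scaleR:
  fixes \<psi> :: "'a \<Rightarrow>\<^sub>L real"
  shows "seq_seminorm xs (c *\<^sub>R \<psi>) = \<bar>c\<bar> * seq_seminorm xs \<psi>"
proof (cases "c = 0")
  case True
  then show ?thesis
    using seq_seminorm_least[of 0 xs 0] seq_seminorm_upper[of 0 0] by simp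
next
  case False
  have "seq_seminorm xs \<psi> \<le> \<bar>1 / c\<bar> * seq_seminorm xs (c *\<^sub>R \<psi>)"
    using seq_seminorm_scaleR_le[of "1 / c" "c *\<^sub>R \<psi>"] False by simp
  then have "\<bar>c\<bar> * seq_seminorm xs \<psi> \<le> seq_seminorm xs (c *\<^sub>R \<psi>)"
    using False by (simp add: field_simps)
  then show ?thesis
    using seq_seminorm_scaleR_le[of c \<psi>] by linarith
qed

end

lemma reflexive_space_evaluation:
  fixes F :: "('a::real_normed_vector \<Rightarrow>\<^sub>L real) \<Rightarrow> real"
  assumes "reflexive_space TYPE('a)" and "bounded_linear F"
  obtains x where "\<And>\<psi>. F \<psi> = \<psi> x"
  using assms bounded_linear_Blinfun_apply unfolding reflexive_space_def by metis

lemma reflexive_weakly_convergent_if_weakly_Cauchy: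
  fixes xs :: "nat \<Rightarrow> 'a::real_normed_vector"
  assumes refl: "reflexive_space TYPE('a)" and norm_le: "\<And>n. norm (xs n) \<le> B"
    and conv: "\<And>\<psi>::'a \<Rightarrow>\<^sub>L real. convergent (\<lambda>n. \<psi> (xs n))"
  shows "\<exists>x. weakly_converges_to xs x"
proof -
  define L where "L \<psi> = lim (\<lambda>n. \<psi> (xs n))" for \<psi> :: "'a \<Rightarrow>\<^sub>L real"
  have L: "(\<lambda>n. \<psi> (xs n)) \<longlonglongrightarrow> L \<psi>" for \<psi> :: "'a \<Rightarrow>\<^sub>L real"
    unfolding L_def using conv by (rule convergent_LIMSEQ_iff[THEN iffD1])
  have "bounded_linear L"
  proof (rule bounded_linear_intro[where K = B])
    show "L (\<phi> + \<psi>) = L \<phi> + L \<psi>" for \<phi> \<psi>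
      using tendsto_add[OF L[of \<phi>] L[of \<psi>]] L[of "\<phi> + \<psi>"]
      by (simp add: blinfun.add_left LIMSEQ_unique)
    show "L (c *\<^sub>R \<psi>) = c *\<^sub>R L \<psi>" for c \<psi>
      using tendsto_mult_left[OF L[of \<psi>], of c] L[of "c *\<^sub>R \<psi>"]
      by (simp add: blinfun.scaleR_left LIMSEQ_unique)
    show "norm (L \<psi>) \<le> norm \<psi> * B" for \<psi>
      using tendsto_rabs[OF L[of \<psi>]] blinfun_seq_abs_le[of xs B, OF norm_le]
      by (simp add: LIMSEQ_le_const2)
  qed
  then obtain x where "\<And>\<psi>. L \<psi> = \<psi> x"
    using reflexive_space_evaluation[OF refl] by blast
  then show ?thesis
    using L unfolding weakly_converges_to_def by auto
qed

lemma subspace_blinfun_convergent: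
  "subspace {\<psi> :: 'a::real_normed_vector \<Rightarrow>\<^sub>L 'b::real_normed_vector. convergent (\<lambda>n. \<psi> (xs n))}"
    (is "subspace ?C")
proof (rule subspaceI)
  show "0 \<in> ?C"
    by (simp add: convergent_const)
  show "\<phi> + \<psi> \<in> ?C" if "\<phi> \<in> ?C" "\<psi> \<in> ?C" for \<phi> \<psi>
    using that by (simp add: blinfun.add_left convergent_add)
  show "c *\<^sub>R \<psi> \<in> ?C" if "\<psi> \<in> ?C" for c \<psi>
    using that tendsto_scaleR[OF tendsto_const[of c]]
    by (auto simp: blinfun.scaleR_left convergent_def)
qed

lemma norming_functionals_vanish_imp_zero:
  fixes g :: "'a::real_normed_vector \<Rightarrow> 'a \<Rightarrow>\<^sub>L real"
  assumes "x \<in> closure S"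
    and norming: "\<And>y. y \<in> S \<Longrightarrow> g y y = norm y" "\<And>y z. y \<in> S \<Longrightarrow> \<bar>g y z\<bar> \<le> norm z"
    and vanish: "\<And>y. y \<in> S \<Longrightarrow> g y x = 0"
  shows "x = 0"
proof (rule ccontr)
  assume "x \<noteq> 0"
  then have "0 < norm x / 2"
    by simp
  then obtain y where "y \<in> S" and "dist y x < norm x / 2"
    using \<open>x \<in> closure S\<close> closure_approachable by blast
  then have close: "norm (y - x) < norm x / 2"
    by (simp add: dist_norm)
  have "norm y = g y (y - x)"
    using norming(1) vanish \<open>y \<in> S\<close> by (simp add: blinfun.diff_right)
  also have "\<dots> \<le> norm (y - x)"
    using norming(2)[OF \<open>y \<in> S\<close>, of "y - x"] by simp
  finally have "norm x \<le> 2 * norm (y - x)"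
    using norm_triangle_sub[of x y] norm_minus_commute[of x y] by linarith
  then show False
    using close by simp
qed

lemma seq_seminorm_dense_span:
  fixes xs :: "nat \<Rightarrow> 'a::real_normed_vector" and G :: "('a \<Rightarrow>\<^sub>L real) set"
  assumes refl: "reflexive_space TYPE('a)" and norm_le: "\<And>n. norm (xs n) \<le> B"
    and Y: "subspace Y" "closed Y" "\<And>n. xs n \<in> Y"
    and total: "\<forall>x\<in>Y. (\<forall>g\<in>G. g x = 0) \<longrightarrow> x = 0"
    and "0 < e"
  shows "\<exists>m\<in>span G. seq_seminorm xs (\<phi> - m) < e"
proof (rule ccontr)
  assume "\<not> ?thesis"
  then have far: "e \<le> seq_seminorm xs (\<phi> - m)" if "m \<in> span G" for m :: "'a \<Rightarrow>\<^sub>L real"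
    using that by force
  obtain F where F: "linear F" "\<forall>m\<in>span G. F m = 0" "F \<phi> = e"
    and F_le: "\<And>\<psi>. \<bar>F \<psi>\<bar> \<le> seq_seminorm xs \<psi>"
    using hahn_banach_seminorm_subspace[OF seq_seminorm_triangle[of xs B, OF norm_le]
        seq_seminorm_scaleR[of xs B, OF norm_le] subspace_span \<open>0 < e\<close> far] by blast
  have "bounded_linear F"
  proof (rule bounded_linear_intro[where K = B])
    show "F (\<psi> + \<psi>') = F \<psi> + F \<psi>'" "F (c *\<^sub>R \<psi>) = c *\<^sub>R F \<psi>" for \<psi> \<psi>' c
      using F(1) by (simp_all add: linear_add linear_scale)
    show "norm (F \<psi>) \<le> norm \<psi> * B" for \<psi>
      using F_le[of \<psi>] seq_seminorm_le_norm[of xs B, OF norm_le, of \<psi>] by simp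
  qed
  then obtain x where x: "\<And>\<psi>. F \<psi> = \<psi> x"
    using reflexive_space_evaluation[OF refl] by blast
  have "x \<in> Y"
  proof (rule mem_closed_subspace_if_annihilators_vanish[OF Y(1,2)])
    fix g :: "'a \<Rightarrow>\<^sub>L real"
    assume "\<forall>y\<in>Y. g y = 0"
    then have "seq_seminorm xs g \<le> 0"
      using Y(3) by (intro seq_seminorm_least) simp
    then show "g x = 0"
      using F_le[of g] x[of g] by simp
  qed
  moreover have "g x = 0" if "g \<in> G" for g
    using F(2) x[of g] span_base[OF that] by simp
  ultimately have "x = 0"
    using total by blast
  then show False
    using F(3) x[of \<phi>] \<open>0 < e\<close> by simp
qed

lemma subspace_closure_if_rat_subspace:
  fixes A :: "'a::real_normed_vector set"
  assumes "0 \<in> A" and add: "\<And>x y. x \<in> A \<Longrightarrow> y \<in> A \<Longrightarrow> x + y \<in> A"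
    and scale: "\<And>r x. x \<in> A \<Longrightarrow> of_rat r *\<^sub>R x \<in> A"
  shows "subspace (closure A)"
proof -
  have "(+) a ` closure A \<subseteq> closure A" if "a \<in> A" for a
    using add[OF that] closure_subset
    by (intro image_closure_subset) (auto intro!: continuous_intros)
  then have add_closure: "(\<lambda>x. x + y) ` closure A \<subseteq> closure A" if "y \<in> closure A" for y
    using that by (intro image_closure_subset) (auto simp: add.commute intro!: continuous_intros)
  have "(\<lambda>c. c *\<^sub>R x) ` \<rat> \<subseteq> closure A" if "x \<in> closure A" for x
  proof -
    have "(*\<^sub>R) (of_rat r) ` closure A \<subseteq> closure A" for r
      using scale closure_subset
      by (intro image_closure_subset) (auto intro!: continuous_intros)
    then show ?thesis
      using that by (auto elim!: Rats_cases)
  qed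
  then have "(\<lambda>c. c *\<^sub>R x) ` closure \<rat> \<subseteq> closure A" if "x \<in> closure A" for x
    using that by (intro image_closure_subset) (auto intro!: continuous_intros)
  then show ?thesis
    using add_closure closure_subset \<open>0 \<in> A\<close>
    unfolding subspace_def Rats_closure_real by blast
qed

text \<open>Rational combinations of a sequence form a dense subset of its closed span that is
  indexed by a countable type, as the diagonal argument requires.\<close>

definition rat_combination :: "(nat \<Rightarrow> 'a::real_vector) \<Rightarrow> (rat \<times> nat) list \<Rightarrow> 'a" where
  "rat_combination xs l = (\<Sum>(r, n)\<leftarrow>l. of_rat r *\<^sub>R xs n)"

lemma scaleR_rat_combination:
  "of_rat r *\<^sub>R rat_combination xs l = rat_combination xs (map (\<lambda>(s, n). (r * s, n)) l)"
  unfolding rat_combination_def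
  by (induction l) (auto simp: scaleR_add_right of_rat_mult)

lemma subspace_closure_rat_combinations:
  fixes xs :: "nat \<Rightarrow> 'a::real_normed_vector"
  shows "subspace (closure (range (rat_combination xs)))"
proof (rule subspace_closure_if_rat_subspace)
  show "0 \<in> range (rat_combination xs)"
    using rat_combination_def[of xs "[]"] by auto
  show "x + y \<in> range (rat_combination xs)"
    if xy: "x \<in> range (rat_combination xs)" "y \<in> range (rat_combination xs)" for x y
  proof -
    obtain l l' where "x = rat_combination xs l" "y = rat_combination xs l'"
      using xy by blast
    then have "x + y = rat_combination xs (l @ l')"
      unfolding rat_combination_def by simp
    then show ?thesis
      by blast
  qed
  show "of_rat r *\<^sub>R x \<in> range (rat_combination xs)" if "x \<in> range (rat_combination xs)" for r x
    using that scaleR_rat_combination by auto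
qed

lemma in_closure_rat_combinations:
  fixes xs :: "nat \<Rightarrow> 'a::real_normed_vector"
  shows "xs n \<in> closure (range (rat_combination xs))"
proof -
  have "rat_combination xs [(1, n)] = xs n"
    unfolding rat_combination_def by simp
  then have "xs n \<in> range (rat_combination xs)"
    by (metis rangeI)
  then show ?thesis
    by (rule closure_subset[THEN subsetD])
qed

theorem reflexive_bounded_seq_weakly_convergent_subseq:
  fixes xs :: "nat \<Rightarrow> 'a::real_normed_vector"
  assumes refl: "reflexive_space TYPE('a)" and norm_le: "\<And>n. norm (xs n) \<le> B"
  shows "\<exists>s x. strict_mono s \<and> weakly_converges_to (xs \<circ> s) x"
proof -
  define Y where "Y = closure (range (rat_combination xs))"
  obtain g :: "'a \<Rightarrow> 'a \<Rightarrow>\<^sub>L real" where g: "\<And>y. g y y = norm y" "\<And>y z. \<bar>g y z\<bar> \<le> norm z"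
    using norming_blinfun_exists by metis
  define G where "G = range (g \<circ> rat_combination xs)"
  have "\<bar>g y (xs n)\<bar> \<le> B" for y n
    using g(2)[of y "xs n"] norm_le[of n] by linarith
  then have "bounded (range (\<lambda>n. g (rat_combination xs l) (xs n)))" for l
    unfolding bounded_iff by auto
  then obtain s where "strict_mono s"
    and conv_G: "\<And>l. convergent (\<lambda>n. g (rat_combination xs l) (xs (s n)))"
    using diagonal_convergent_subseq[of "\<lambda>l n. g (rat_combination xs l) (xs n)"] by blast
  define ys where "ys = xs \<circ> s"
  have norm_le_ys: "\<And>n. norm (ys n) \<le> B"
    unfolding ys_def using norm_le by simp
  have Y: "subspace Y" "closed Y" "\<And>n. ys n \<in> Y"
    unfolding Y_def ys_def
    using subspace_closure_rat_combinations in_closure_rat_combinations by auto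
  have total: "\<forall>x\<in>Y. (\<forall>h\<in>G. h x = 0) \<longrightarrow> x = 0"
  proof (intro ballI impI)
    fix x
    assume "x \<in> Y" and "\<forall>h\<in>G. h x = 0"
    then show "x = 0"
      unfolding Y_def G_def
      by (intro norming_functionals_vanish_imp_zero[where g = g]) (auto simp: g)
  qed
  have conv_span: "convergent (\<lambda>n. m (ys n))" if "m \<in> span G" for m
    using that subspace_blinfun_convergent[of ys]
    by (rule span_induct) (auto simp: G_def ys_def conv_G)
  have "convergent (\<lambda>n. \<psi> (ys n))" for \<psi> :: "'a \<Rightarrow>\<^sub>L real"
  proof (rule convergent_if_uniformly_approximable)
    fix e :: real
    assume "0 < e"
    from seq_seminorm_dense_span[where xs = ys and \<phi> = \<psi>, OF refl norm_le_ys Y total \<open>0 < e\<close>]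
    obtain m where "m \<in> span G" and m: "seq_seminorm ys (\<psi> - m) < e"
      by (elim bexE)
    have "dist (\<psi> (ys n)) (m (ys n)) \<le> e" for n
      using seq_seminorm_upper[where xs = ys and \<psi> = "\<psi> - m", OF norm_le_ys, of n] m
      by (simp add: dist_real_def blinfun.diff_left)
    then show "\<exists>h. convergent h \<and> (\<forall>n. dist (\<psi> (ys n)) (h n) \<le> e)"
      using conv_span[OF \<open>m \<in> span G\<close>] by blast
  qed
  then obtain x where "weakly_converges_to ys x"
    using reflexive_weakly_convergent_if_weakly_Cauchy[where xs = ys, OF refl norm_le_ys] by blast
  then show ?thesis
    using \<open>strict_mono s\<close> unfolding ys_def by blast
qed

section \<open>Coercivity\<close>

lemma dist_profile_in_linf_pos:
  fixes x :: "'a::real_normed_vector"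
  assumes "bounded F"
  shows "(\<lambda>a. if a \<in> F then norm (x - a) else 0) \<in> linf_pos F"
proof -
  obtain C where C: "\<And>a. a \<in> F \<Longrightarrow> norm a \<le> C"
    using assms unfolding bounded_iff by blast
  have "norm (x - a) \<le> norm x + C" if "a \<in> F" for a
    using norm_triangle_ineq4[of x a] C[OF that] by linarith
  then have "bounded ((\<lambda>a. if a \<in> F then norm (x - a) else 0) ` F)"
    unfolding bounded_iff by auto
  then show ?thesis
    unfolding linf_pos_def by auto
qed

lemma sup_norm_upper:
  assumes "\<phi> \<in> linf_pos F" and "a \<in> F"
  shows "\<bar>\<phi> a\<bar> \<le> sup_norm F \<phi>"
proof -
  obtain C where "\<And>y. y \<in> \<phi> ` F \<Longrightarrow> \<bar>y\<bar> \<le> C"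
    using assms(1) unfolding linf_pos_def bounded_iff by auto
  then have "bdd_above ((\<lambda>a. \<bar>\<phi> a\<bar>) ` F)"
    by (intro bdd_aboveI2[where M = C]) auto
  then show ?thesis
    unfolding sup_norm_def by (rule cSUP_upper[OF assms(2)])
qed

lemma Fcmc_sublevel_bounded:
  fixes v :: "nat \<Rightarrow> 'a::real_normed_vector"
  assumes "F \<in> CB" and "f \<in> Fcmc F" and r_le: "\<And>n. r_f f (v n) F \<le> K"
  shows "\<exists>B. \<forall>n. norm (v n) \<le> B"
proof -
  obtain a where "a \<in> F" and "bounded F"
    using assms(1) unfolding CB_def by blast
  obtain R where R: "\<And>\<phi>. \<phi> \<in> linf_pos F \<Longrightarrow> R \<le> sup_norm F \<phi> \<Longrightarrow> K + 1 \<le> f \<phi>"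
    using assms(2) unfolding Fcmc_def by blast
  have "norm (v n) \<le> R + norm a" for n
  proof -
    define \<phi> where "\<phi> = (\<lambda>b. if b \<in> F then norm (v n - b) else 0)"
    have "\<phi> \<in> linf_pos F"
      unfolding \<phi>_def using \<open>bounded F\<close> by (rule dist_profile_in_linf_pos)
    moreover have "f \<phi> < K + 1"
      using r_le[of n] unfolding r_f_def \<phi>_def by linarith
    ultimately have "sup_norm F \<phi> < R"
      using R not_le by blast
    then have "norm (v n - a) < R"
      using sup_norm_upper[OF \<open>\<phi> \<in> linf_pos F\<close> \<open>a \<in> F\<close>] \<open>a \<in> F\<close>
      unfolding \<phi>_def by simp
    then show ?thesis
      using norm_triangle_sub[of "v n" a] by linarith
  qed
  then show ?thesis
    by blast
qed

theorem theorem2p3: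
  fixes V :: "'a::banach set"
  assumes "reflexive_space TYPE('a)"
    and "V \<noteq> {}" and "closed V" and "convex V"
  shows "weak_SACP V CB Fcmc"
  unfolding weak_SACP_def
proof (intro ballI allI impI)
  fix F f and v :: "nat \<Rightarrow> 'a"
  assume "F \<in> CB" and "f \<in> Fcmc F"
    and "(\<forall>n. v n \<in> V) \<and> (\<lambda>n. r_f f (v n) F) \<longlonglongrightarrow> rad_f f V F"
  then have "Bseq (\<lambda>n. r_f f (v n) F)"
    using convergent_imp_Bseq convergentI by blast
  then obtain K where "\<And>n. r_f f (v n) F \<le> K"
    by (metis BseqE abs_le_D1 real_norm_def)
  then obtain B where "\<And>n. norm (v n) \<le> B"
    using Fcmc_sublevel_bounded[OF \<open>F \<in> CB\<close> \<open>f \<in> Fcmc F\<close>] by blast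
  then show "\<exists>s x. strict_mono s \<and> weakly_converges_to (v \<circ> s) x"
    using reflexive_bounded_seq_weakly_convergent_subseq[OF assms(1)] by blast
qed

end
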